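(* Let $\mathcal{P}\subseteq\mathbb{Z}_{\geq0}$ with $0\in\mathcal{P}$ and $\mathcal{P}-2\neq\emptyset$. Then for all $k\ge0$, $\tau_k^\mathcal{P}<\tau_{k+1}^\mathcal{P}<\tau_\mathcal{P}$, and the sequence $(\tau_k^\mathcal{P})_{k\ge0}$ converges to $\tau_\mathcal{P}$.
   Context: $e_\mathcal{P}(z)=\sum_{n\in\mathcal{P}}z^n/n!$; $\mathcal{P}-2=\{n-2:n\in\mathcal{P},n\ge2\}$. $\tau_\mathcal{P}$ is the unique $\tau\in\mathbb{R}_{>0}$ with $e_\mathcal{P}(\tau)-\tau e_\mathcal{P}'(\tau)=0$, and $\rho_\mathcal{P}=\tau_\mathcal{P}/e_\mathcal{P}(\tau_\mathcal{P})$. Define power series $T^\mathcal{P}_{\le h}(z)$ by $T^\mathcal{P}_{\le -1}(z)=0$ and $T^\mathcal{P}_{\le h}(z)=z\,e_\mathcal{P}(T^\mathcal{P}_{\le h-1}(z))$ for $h\ge0$ (these are entire functions; $T^\mathcal{P}_{\le h}$ is the exponential generating function of labeled rooted trees of height at most $h$ in which every vertex has a number of children in $\mathcal{P}$). Then $\tau_k^\mathcal{P}=T^\mathcal{P}_{\le k-1}(\rho_\mathcal{P})$; equivalently $\tau_0^\mathcal{P}=0$ and $\tau_{k+1}^\mathcal{P}=\rho_\mathcal{P}e_\mathcal{P}(\tau_k^\mathcal{P})$. *)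

theory Defs
  imports "HOL-Analysis.Analysis"
begin

definition eP :: "nat set \<Rightarrow> real \<Rightarrow> real" where
  "eP P z = (\<Sum>n. if n \<in> P then z ^ n / fact n else 0)"

definition tauP :: "nat set \<Rightarrow> real" where
  "tauP P = (THE t. t > 0 \<and> eP P t - t * deriv (eP P) t = 0)"

definition rhoP :: "nat set \<Rightarrow> real" where
  "rhoP P = tauP P / eP P (tauP P)"

text \<open>T_{\<le>h}(z): T_{\<le>-1} = 0, T_{\<le>h} = z e_P(T_{\<le>h-1}); indexed with shift so
  Tle P k z = T_{\<le>k-1}(z).\<close>
primrec Tle :: "nat set \<Rightarrow> nat \<Rightarrow> real \<Rightarrow> real" where
  "Tle P 0 z = 0"
| "Tle P (Suc k) z = z * eP P (Tle P k z)"

definition tauk :: "nat set \<Rightarrow> nat \<Rightarrow> real" where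
  "tauk P k = Tle P k (rhoP P)"

end

theory Submission
  imports Defs
begin

text \<open>Since P contains some n \<ge> 2, e_P lies strictly above each of its tangent lines on
  [0, \<infinity>). Hence the intercept e_P(t) - t e_P'(t) of the tangent at t strictly decreases from 1
  to negative values, so \<tau>_P is the unique point whose tangent passes through the origin, and
  that tangent is the line x \<mapsto> x / \<rho>_P. The map G(x) = \<rho>_P e_P(x) is increasing with
  G(0) = \<rho>_P > 0 and G(\<tau>_P) = \<tau>_P, so its iterates \<tau>_k^P from 0 increase strictly below \<tau>_P
  and converge to a nonnegative fixed point of G; as G(x) > x for every other x \<ge> 0, that
  fixed point is \<tau>_P.\<close>

lemma sums_strict_mono:
  fixes f g :: "nat \<Rightarrow> real"
  assumes "f sums a" "g sums b" "\<And>n. f n \<le> g n" "f i < g i"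
  shows "a < b"
proof -
  have diff: "(\<lambda>n. g n - f n) sums (b - a)"
    using assms(1,2) by (rule sums_diff[rotated])
  have "0 < suminf (\<lambda>n. g n - f n)"
    using assms(3,4) by (subst suminf_pos_iff[OF sums_summable[OF diff]]) auto
  then show ?thesis
    using sums_unique[OF diff] by simp
qed

lemma Bernoulli_inequality_strict:
  fixes x :: real
  assumes "-1 \<le> x" "x \<noteq> 0" "2 \<le> n"
  shows "1 + real n * x < (1 + x) ^ n"
proof -
  obtain m where n: "n = Suc m" and m: "1 \<le> m"
    using assms(3) by (cases n) auto
  have "1 + real n * x < 1 + real n * x + real m * x\<^sup>2"
    using assms(2) m by simp
  also have "\<dots> = (1 + x) * (1 + real m * x)"
    by (simp add: n power2_eq_square algebra_simps)
  also have "\<dots> \<le> (1 + x) * (1 + x) ^ m"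
    using assms(1) by (intro mult_left_mono Bernoulli_inequality) auto
  finally show ?thesis
    by (simp add: n)
qed

lemma power_above_tangent:
  fixes t x :: real
  assumes "0 \<le> t" "0 \<le> x"
  shows "t ^ Suc n + real (Suc n) * t ^ n * (x - t) \<le> x ^ Suc n"
proof (cases "t = 0")
  case True
  then show ?thesis
    using assms(2) by (cases n) auto
next
  case False
  define y where "y = (x - t) / t"
  have x: "x = t * (1 + y)"
    using False by (simp add: y_def field_simps)
  have "t ^ Suc n * (1 + real (Suc n) * y) \<le> t ^ Suc n * (1 + y) ^ Suc n"
    using assms False by (intro mult_left_mono Bernoulli_inequality) (auto simp: y_def field_simps)
  moreover have "x ^ Suc n = t ^ Suc n * (1 + y) ^ Suc n"
    by (simp add: x power_mult_distrib)
  moreover have "t ^ Suc n * (1 + real (Suc n) * y) = t ^ Suc n + real (Suc n) * t ^ n * (x - t)"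
    by (simp add: x algebra_simps)
  ultimately show ?thesis
    by simp
qed

lemma power_above_tangent_strict:
  fixes t x :: real
  assumes "0 \<le> t" "0 \<le> x" "x \<noteq> t" "1 \<le> n"
  shows "t ^ Suc n + real (Suc n) * t ^ n * (x - t) < x ^ Suc n"
proof (cases "t = 0")
  case True
  then show ?thesis
    using assms by (simp add: power_0_left)
next
  case False
  define y where "y = (x - t) / t"
  have x: "x = t * (1 + y)"
    using False by (simp add: y_def field_simps)
  have "t ^ Suc n * (1 + real (Suc n) * y) < t ^ Suc n * (1 + y) ^ Suc n"
    using assms False
    by (intro mult_strict_left_mono Bernoulli_inequality_strict) (auto simp: y_def field_simps)
  moreover have "x ^ Suc n = t ^ Suc n * (1 + y) ^ Suc n"
    by (simp add: x power_mult_distrib)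
  moreover have "t ^ Suc n * (1 + real (Suc n) * y) = t ^ Suc n + real (Suc n) * t ^ n * (x - t)"
    by (simp add: x algebra_simps)
  ultimately show ?thesis
    by simp
qed

definition eP_coeff :: "nat set \<Rightarrow> nat \<Rightarrow> real" where
  "eP_coeff P n = (if n \<in> P then inverse (fact n) else 0)"

definition eP_deriv :: "nat set \<Rightarrow> real \<Rightarrow> real" where
  "eP_deriv P z = (\<Sum>n. diffs (eP_coeff P) n * z ^ n)"

lemma eP_coeff_nonneg: "0 \<le> eP_coeff P n"
  by (simp add: eP_coeff_def)

lemma diffs_eP_coeff: "diffs (eP_coeff P) n = real (Suc n) * eP_coeff P (Suc n)"
  by (simp add: diffs_def)

lemma summable_eP_coeff: "summable (\<lambda>n. eP_coeff P n * z ^ n)"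
proof (rule summable_comparison_test[OF _ summable_exp[of "\<bar>z\<bar>"]])
  show "\<exists>N. \<forall>n\<ge>N. norm (eP_coeff P n * z ^ n) \<le> inverse (fact n) * \<bar>z\<bar> ^ n"
    by (auto simp: eP_coeff_def abs_mult power_abs)
qed

lemma summable_diffs_eP_coeff: "summable (\<lambda>n. diffs (eP_coeff P) n * z ^ n)"
  by (rule termdiff_converges_all) (rule summable_eP_coeff)

lemma eP_powser: "eP P = (\<lambda>z. \<Sum>n. eP_coeff P n * z ^ n)"
  unfolding eP_def eP_coeff_def by (intro ext suminf_cong) (simp add: field_simps)

lemma sums_eP: "(\<lambda>n. eP_coeff P n * z ^ n) sums eP P z"
  unfolding eP_powser by (rule summable_sums[OF summable_eP_coeff])

lemma sums_eP_deriv: "(\<lambda>n. diffs (eP_coeff P) n * z ^ n) sums eP_deriv P z"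
  unfolding eP_deriv_def by (rule summable_sums[OF summable_diffs_eP_coeff])

lemma sums_times_eP_deriv: "(\<lambda>n. real n * eP_coeff P n * t ^ n) sums (t * eP_deriv P t)"
proof -
  have "(\<lambda>n. t * (diffs (eP_coeff P) n * t ^ n)) sums (t * eP_deriv P t)"
    by (rule sums_mult[OF sums_eP_deriv])
  then have "(\<lambda>n. real (Suc n) * eP_coeff P (Suc n) * t ^ Suc n) sums (t * eP_deriv P t)"
    by (simp add: diffs_eP_coeff mult_ac)
  then show ?thesis
    by (subst (asm) sums_Suc_iff) simp
qed

lemma has_field_derivative_eP: "(eP P has_field_derivative eP_deriv P z) (at z)"
  unfolding eP_powser eP_deriv_def
  by (rule termdiffs_strong[OF summable_eP_coeff[of P "\<bar>z\<bar> + 1"]]) simp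

lemma deriv_eP: "deriv (eP P) = eP_deriv P"
  using has_field_derivative_eP DERIV_imp_deriv by blast

lemma isCont_eP: "isCont (eP P) z"
  using has_field_derivative_eP DERIV_isCont by blast

lemma isCont_eP_deriv: "isCont (eP_deriv P) z"
  unfolding eP_deriv_def
  by (rule isCont_powser[OF summable_diffs_eP_coeff[of P "\<bar>z\<bar> + 1"]]) simp

lemma eP_0: "0 \<in> P \<Longrightarrow> eP P 0 = 1"
  by (simp add: eP_powser eP_coeff_def)

lemma eP_deriv_nonneg: "0 \<le> z \<Longrightarrow> 0 \<le> eP_deriv P z"
  unfolding eP_deriv_def
  by (intro suminf_nonneg summable_diffs_eP_coeff) (simp add: diffs_eP_coeff eP_coeff_nonneg)

lemma eP_above_tangent:
  assumes "\<exists>n\<in>P. 2 \<le> n" "0 \<le> t" "0 \<le> x" "x \<noteq> t"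
  shows "eP P t + (x - t) * eP_deriv P t < eP P x"
proof -
  obtain n0 where n0: "n0 \<in> P" "2 \<le> n0"
    using assms(1) by blast
  define c where "c = eP_coeff P"
  have tail: "(\<lambda>n. c (Suc n) * z ^ Suc n) sums (eP P z - c 0)" for z
    using sums_eP[of P z] by (subst sums_Suc_iff) (simp add: c_def)
  have "(\<lambda>n. c (Suc n) * t ^ Suc n + (x - t) * (diffs c n * t ^ n))
          sums (eP P t - c 0 + (x - t) * eP_deriv P t)"
    unfolding c_def by (intro sums_add sums_mult sums_eP_deriv tail[unfolded c_def])
  then have lhs: "(\<lambda>n. c (Suc n) * (t ^ Suc n + real (Suc n) * t ^ n * (x - t)))
          sums (eP P t - c 0 + (x - t) * eP_deriv P t)"
    by (simp add: c_def diffs_eP_coeff algebra_simps)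
  have "eP P t - c 0 + (x - t) * eP_deriv P t < eP P x - c 0"
  proof (rule sums_strict_mono[OF lhs tail])
    show "c (Suc n) * (t ^ Suc n + real (Suc n) * t ^ n * (x - t)) \<le> c (Suc n) * x ^ Suc n"
      for n
      using assms by (intro mult_left_mono power_above_tangent) (auto simp: c_def eP_coeff_nonneg)
    have "0 < c (Suc (n0 - 1))"
      using n0 by (simp add: c_def eP_coeff_def)
    then show "c (Suc (n0 - 1)) * (t ^ Suc (n0 - 1) + real (Suc (n0 - 1)) * t ^ (n0 - 1) * (x - t))
        < c (Suc (n0 - 1)) * x ^ Suc (n0 - 1)"
      using assms n0 by (intro mult_strict_left_mono power_above_tangent_strict) auto
  qed
  then show ?thesis
    by simp
qed

lemma eP_strict_mono:
  assumes "\<exists>n\<in>P. 2 \<le> n" "0 \<le> x" "x < y"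
  shows "eP P x < eP P y"
proof -
  have "0 \<le> (y - x) * eP_deriv P x"
    using eP_deriv_nonneg[OF assms(2)] assms(3) by simp
  moreover have "eP P x + (y - x) * eP_deriv P x < eP P y"
    using eP_above_tangent[OF assms(1,2), of y] assms(2,3) by simp
  ultimately show ?thesis
    by linarith
qed

definition eP_tangent_intercept :: "nat set \<Rightarrow> real \<Rightarrow> real" where
  "eP_tangent_intercept P t = eP P t - t * eP_deriv P t"

lemma eP_tangent_intercept_strict_antimono:
  assumes "\<exists>n\<in>P. 2 \<le> n" "0 \<le> s" "s < t"
  shows "eP_tangent_intercept P t < eP_tangent_intercept P s"
proof -
  have st: "eP P s + (t - s) * eP_deriv P s < eP P t"
    using eP_above_tangent[OF assms(1,2), of t] assms by simp
  have ts: "eP P t + (s - t) * eP_deriv P t < eP P s"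
    using eP_above_tangent[OF assms(1), of t s] assms by simp
  have "(t - s) * (eP_deriv P s - eP_deriv P t) < 0"
    using st ts by (simp add: algebra_simps)
  then have "eP_deriv P s < eP_deriv P t"
    using assms(3) by (simp add: mult_less_0_iff)
  then have "s * eP_deriv P s \<le> s * eP_deriv P t"
    using assms(2) by (simp add: mult_left_mono)
  with ts show ?thesis
    by (simp add: eP_tangent_intercept_def algebra_simps)
qed

lemma sums_eP_tangent_intercept:
  "(\<lambda>n. (1 - real n) * eP_coeff P n * t ^ n) sums eP_tangent_intercept P t"
  using sums_diff[OF sums_eP sums_times_eP_deriv]
  by (simp add: eP_tangent_intercept_def algebra_simps)

text \<open>With T = n0! + 1 we get T^n0 > n0!, so the n0-th term alone outweighs the constant term.\<close>

lemma eP_tangent_intercept_neg: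
  assumes "0 \<in> P" "n0 \<in> P" "2 \<le> n0"
  shows "eP_tangent_intercept P (fact n0 + 1) < 0"
proof -
  define T :: real where "T = fact n0 + 1"
  define a where "a n = (real n - 1) * eP_coeff P n * T ^ n" for n
  have a_sums: "a sums - eP_tangent_intercept P T"
    using sums_minus[OF sums_eP_tangent_intercept[of P T]] by (simp add: a_def[abs_def] algebra_simps)
  have "fact n0 < T ^ n0"
    using self_le_power[of T n0] assms(3) by (simp add: T_def)
  then have ratio: "1 < T ^ n0 / fact n0"
    by simp
  have "T ^ n0 / fact n0 \<le> (real n0 - 1) * (T ^ n0 / fact n0)"
    using mult_right_mono[of 1 "real n0 - 1" "T ^ n0 / fact n0"] ratio assms(3) by simp
  moreover have "sum a {0, n0} = (real n0 - 1) * (T ^ n0 / fact n0) - 1"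
    using assms by (simp add: a_def eP_coeff_def divide_inverse)
  ultimately have "0 < sum a {0, n0}"
    using ratio by linarith
  also have "sum a {0, n0} \<le> suminf a"
    by (rule sum_le_suminf[OF sums_summable[OF a_sums]])
       (auto simp: a_def eP_coeff_nonneg T_def)
  finally show ?thesis
    using sums_unique[OF a_sums] T_def by simp
qed

lemma
  assumes "0 \<in> P" "\<exists>n\<in>P. 2 \<le> n"
  shows tauP_pos: "0 < tauP P"
    and eP_tangent_intercept_tauP: "eP_tangent_intercept P (tauP P) = 0"
proof -
  obtain n0 where n0: "n0 \<in> P" "2 \<le> n0"
    using assms(2) by blast
  define T :: real where "T = fact n0 + 1"
  have "continuous_on {0..T} (eP_tangent_intercept P)"
    unfolding eP_tangent_intercept_def
    by (intro continuous_at_imp_continuous_on ballI continuous_intros isCont_eP isCont_eP_deriv)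
  moreover have "eP_tangent_intercept P 0 = 1"
    using assms(1) by (simp add: eP_tangent_intercept_def eP_0)
  moreover have "eP_tangent_intercept P T < 0"
    using eP_tangent_intercept_neg[OF assms(1) n0] by (simp add: T_def)
  ultimately obtain t where t: "0 \<le> t" "t \<le> T" "eP_tangent_intercept P t = 0"
    using IVT2'[of "eP_tangent_intercept P" T 0 0] by (auto simp: T_def)
  have t_pos: "0 < t"
    using t \<open>eP_tangent_intercept P 0 = 1\<close> by (cases "t = 0") auto
  have "\<exists>!t. t > 0 \<and> eP P t - t * deriv (eP P) t = 0"
  proof (rule ex1I[of _ t])
    show "t > 0 \<and> eP P t - t * deriv (eP P) t = 0"
      using t t_pos by (simp add: deriv_eP eP_tangent_intercept_def)
  next
    fix s assume "s > 0 \<and> eP P s - s * deriv (eP P) s = 0"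
    then have "0 < s" "eP_tangent_intercept P s = 0"
      by (simp_all add: deriv_eP eP_tangent_intercept_def)
    then show "s = t"
      using eP_tangent_intercept_strict_antimono[OF assms(2), of s t]
        eP_tangent_intercept_strict_antimono[OF assms(2), of t s] t
      by (cases s t rule: linorder_cases) auto
  qed
  from theI'[OF this] show "0 < tauP P" "eP_tangent_intercept P (tauP P) = 0"
    by (simp_all add: tauP_def deriv_eP eP_tangent_intercept_def)
qed

lemma
  assumes "0 \<in> P" "\<exists>n\<in>P. 2 \<le> n"
  shows rhoP_pos: "0 < rhoP P"
    and rhoP_less_tauP: "rhoP P < tauP P"
    and rhoP_eP_tauP: "rhoP P * eP P (tauP P) = tauP P"
proof -
  have "1 < eP P (tauP P)"
    using eP_strict_mono[OF assms(2) order_refl tauP_pos[OF assms]] eP_0[OF assms(1)] by simp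
  then show "0 < rhoP P" "rhoP P < tauP P" "rhoP P * eP P (tauP P) = tauP P"
    using tauP_pos[OF assms] by (simp_all add: rhoP_def divide_less_eq)
qed

lemma fixed_point_eq_tauP:
  assumes "0 \<in> P" "\<exists>n\<in>P. 2 \<le> n" "0 \<le> x" "rhoP P * eP P x = x"
  shows "x = tauP P"
proof (rule ccontr)
  define t where "t = tauP P"
  have t: "0 < t" "eP P t = t * eP_deriv P t"
    using tauP_pos[OF assms(1,2)] eP_tangent_intercept_tauP[OF assms(1,2)]
    by (simp_all add: t_def eP_tangent_intercept_def)
  assume "x \<noteq> tauP P"
  then have "eP P t + (x - t) * eP_deriv P t < eP P x"
    using eP_above_tangent[OF assms(2) _ assms(3)] t(1) by (simp add: t_def)
  then have "t * (x * eP_deriv P t) < t * eP P x"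
    using t by (simp add: algebra_simps)
  then have "rhoP P * (t * (x * eP_deriv P t)) < rhoP P * (t * eP P x)"
    using rhoP_pos[OF assms(1,2)] by simp
  then have "x * (rhoP P * eP P t) < t * (rhoP P * eP P x)"
    using t(2) by (simp add: ac_simps)
  then show False
    using rhoP_eP_tauP[OF assms(1,2)] assms(4) by (simp add: t_def mult.commute)
qed

lemma tauk_Suc: "tauk P (Suc k) = rhoP P * eP P (tauk P k)"
  by (simp add: tauk_def)

lemma tauk_bounds:
  assumes "0 \<in> P" "\<exists>n\<in>P. 2 \<le> n"
  shows "0 \<le> tauk P k \<and> tauk P k < tauk P (Suc k) \<and> tauk P (Suc k) < tauP P"
proof (induction k)
  case 0
  then show ?case
    using rhoP_pos[OF assms] rhoP_less_tauP[OF assms] eP_0[OF assms(1)] by (simp add: tauk_def)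
next
  case (Suc k)
  have G_mono: "rhoP P * eP P a < rhoP P * eP P b" if "0 \<le> a" "a < b" for a b
    using eP_strict_mono[OF assms(2) that] rhoP_pos[OF assms] by simp
  show ?case
    using G_mono[of "tauk P k" "tauk P (Suc k)"] G_mono[of "tauk P (Suc k)" "tauP P"] Suc
      rhoP_eP_tauP[OF assms] by (simp add: tauk_Suc[of P "Suc k"] tauk_Suc[of P k])
qed

lemma tauk_tendsto_tauP:
  assumes "0 \<in> P" "\<exists>n\<in>P. 2 \<le> n"
  shows "tauk P \<longlonglongrightarrow> tauP P"
proof -
  have "incseq (tauk P)"
    using tauk_bounds[OF assms] by (intro incseq_SucI less_imp_le) blast
  moreover have "\<forall>k. tauk P k \<le> tauP P"
    using tauk_bounds[OF assms] by (meson less_imp_le less_trans)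
  ultimately obtain L where L: "tauk P \<longlonglongrightarrow> L" "\<forall>k. tauk P k \<le> L"
    using incseq_convergent by blast
  have "(\<lambda>k. rhoP P * eP P (tauk P k)) \<longlonglongrightarrow> rhoP P * eP P L"
    by (intro tendsto_mult tendsto_const isCont_tendsto_compose[OF isCont_eP L(1)])
  moreover have "(\<lambda>k. rhoP P * eP P (tauk P k)) \<longlonglongrightarrow> L"
    using L(1)[THEN LIMSEQ_Suc] by (simp add: tauk_Suc)
  ultimately have "rhoP P * eP P L = L"
    by (rule LIMSEQ_unique)
  moreover have "0 \<le> L"
    using L(2) tauk_bounds[OF assms, of 0] order_trans by blast
  ultimately show ?thesis
    using L(1) fixed_point_eq_tauP[OF assms] by simp
qed

theorem lemma7p3:
  fixes P :: "nat set"
  assumes "0 \<in> P" and "\<exists>n\<in>P. n \<ge> 2"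
  shows "(\<forall>k. tauk P k < tauk P (Suc k) \<and> tauk P (Suc k) < tauP P)
         \<and> (\<lambda>k. tauk P k) \<longlonglongrightarrow> tauP P"
  using tauk_bounds[OF assms] tauk_tendsto_tauP[OF assms] by auto

end
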